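(* Let $(R,\mathfrak m,k)$ be a one-dimensional analytically irreducible local domain with canonical map $k\to\overline R/\mathfrak n$ an isomorphism, with $v,a_i,n,I_i,\mathcal T(R)$ as in the context. Let $n\ge 4$ and $1\le i\le n-3$, and take $q,q'\in R$ with $v(q)=a_i$, $v(q')=a_{i+1}$. For $\alpha\in R$ put $J_\alpha^{(i)}=(q+\alpha q')+I_{i+2}$. Assume $I_iI_{i+2}\ne qI_{i+2}$ and $I_{i+1}I_{i+3}=q'I_{i+3}$. Then: (1) $J^{(i)}_\alpha\in\mathcal T(R)$ for every $\alpha\in R$; (2) if $\alpha,\beta\in R$ with $\alpha-\beta\notin\mathfrak m$, then $J^{(i)}_\alpha\not\supseteq J^{(i)}_\beta$; (3) if $k$ is infinite, then $\mathcal T(R)$ is an infinite set.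
   Context: $\overline R$ is the integral closure of $R$ in $Q(R)$, assumed finitely generated over $R$ and local with maximal ideal $\mathfrak n$; $v$ is the normalized valuation of $\overline R$; $v(R)=\{a_0=0<a_1<\cdots\}$; $n$ is the smallest integer with $a_{n+j}=a_n+j$ for all $j\ge 0$; $I_j=\{r\in R\mid v(r)\ge a_j\}$ for $0\le j\le n$. $\mathcal T(R)$ is the set of nonzero trace ideals of $R$, where a trace ideal is one of the form $\sum_{f\in\mathrm{Hom}_R(M,R)}\mathrm{Im}f$ for some module $M$. *)

theory Defs
  imports "HOL-Algebra.Module" "HOL-Library.Infinite_Set"
begin

text \<open>Setting: R is a subring of a field K (the type 'k), K is the fraction field Q(R).\<close>

definition is_subring :: "'k::field set \<Rightarrow> bool" where
  "is_subring R \<longleftrightarrow> 0 \<in> R \<and> 1 \<in> R \<and>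
     (\<forall>x\<in>R. \<forall>y\<in>R. x + y \<in> R \<and> x - y \<in> R \<and> x * y \<in> R)"

definition is_frac_field_of :: "'k::field set \<Rightarrow> bool" where
  "is_frac_field_of R \<longleftrightarrow> (\<forall>x::'k. \<exists>a\<in>R. \<exists>b\<in>R. b \<noteq> 0 \<and> x = a / b)"

definition integral_over :: "'k::field set \<Rightarrow> 'k \<Rightarrow> bool" where
  "integral_over R x \<longleftrightarrow>
     (\<exists>(d::nat) c. (\<forall>i<d. c i \<in> R) \<and> x ^ d + (\<Sum>i<d. c i * x ^ i) = 0)"

definition int_closure :: "'k::field set \<Rightarrow> 'k set" where
  "int_closure R = {x. integral_over R x}"

definition fin_gen_over :: "'k::field set \<Rightarrow> 'k set \<Rightarrow> bool" where
  "fin_gen_over R S \<longleftrightarrow>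
     (\<exists>G. finite G \<and> S = {x. \<exists>c. (\<forall>g\<in>G. c g \<in> R) \<and> x = (\<Sum>g\<in>G. c g * g)})"

text \<open>v is the normalized (discrete, surjective onto the integers) valuation of K whose
  valuation ring is the given set V (the value of v at 0 is irrelevant; 0 has value infinity).\<close>
definition normalized_valuation_of :: "'k::field set \<Rightarrow> ('k \<Rightarrow> int) \<Rightarrow> bool" where
  "normalized_valuation_of V v \<longleftrightarrow>
     (\<forall>x y. x \<noteq> 0 \<longrightarrow> y \<noteq> 0 \<longrightarrow> v (x * y) = v x + v y) \<and>
     (\<forall>x y. x \<noteq> 0 \<longrightarrow> y \<noteq> 0 \<longrightarrow> x + y \<noteq> 0 \<longrightarrow> min (v x) (v y) \<le> v (x + y)) \<and>
     (\<forall>z. \<exists>x. x \<noteq> 0 \<and> v x = z) \<and>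
     V = {x. x = 0 \<or> 0 \<le> v x}"

definition val_maxideal :: "('k::field \<Rightarrow> int) \<Rightarrow> 'k set" where
  "val_maxideal v = {x. x = 0 \<or> 0 < v x}"

definition maxideal :: "'k::field set \<Rightarrow> 'k set" where
  "maxideal R = {r \<in> R. \<not> (\<exists>s\<in>R. r * s = 1)}"

definition residue_field :: "'k::field set \<Rightarrow> 'k set set" where
  "residue_field R = (\<lambda>r. {s \<in> R. r - s \<in> maxideal R}) ` R"

text \<open>The canonical map k \<rightarrow> Rbar/n is surjective (it is automatically injective).\<close>
definition residue_iso :: "'k::field set \<Rightarrow> ('k \<Rightarrow> int) \<Rightarrow> bool" where
  "residue_iso R v \<longleftrightarrow> (\<forall>x\<in>int_closure R. \<exists>r\<in>R. x - r \<in> val_maxideal v)"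

text \<open>Value semigroup v(R) and its increasing enumeration a_0 = 0 < a_1 < ...\<close>
definition valsemi :: "'k::field set \<Rightarrow> ('k \<Rightarrow> int) \<Rightarrow> int set" where
  "valsemi R v = {v r | r. r \<in> R \<and> r \<noteq> 0}"

definition aseq :: "'k::field set \<Rightarrow> ('k \<Rightarrow> int) \<Rightarrow> nat \<Rightarrow> int" where
  "aseq R v j = int (enumerate (nat ` valsemi R v) j)"

definition cond_index :: "'k::field set \<Rightarrow> ('k \<Rightarrow> int) \<Rightarrow> nat" where
  "cond_index R v = (LEAST n. \<forall>j. aseq R v (n + j) = aseq R v n + int j)"

definition Iideal :: "'k::field set \<Rightarrow> ('k \<Rightarrow> int) \<Rightarrow> nat \<Rightarrow> 'k set" where
  "Iideal R v j = {r \<in> R. r = 0 \<or> aseq R v j \<le> v r}"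

definition ideal_prod :: "'k::field set \<Rightarrow> 'k set \<Rightarrow> 'k set" where
  "ideal_prod I J = {x. \<exists>(N::nat) f g. (\<forall>k<N. f k \<in> I \<and> g k \<in> J) \<and> x = (\<Sum>k<N. f k * g k)}"

definition elt_times :: "'k::field \<Rightarrow> 'k set \<Rightarrow> 'k set" where
  "elt_times q I = {q * x | x. x \<in> I}"

definition plus_principal :: "'k::field set \<Rightarrow> 'k \<Rightarrow> 'k set \<Rightarrow> 'k set" where
  "plus_principal R x I = {r * x + y | r y. r \<in> R \<and> y \<in> I}"

definition ringR :: "'k::field set \<Rightarrow> 'k ring" where
  "ringR R = \<lparr>carrier = R, monoid.mult = (*), one = 1, zero = 0, add = (+)\<rparr>"

definition lin_to_R :: "'k::field set \<Rightarrow> ('k, 'm) module \<Rightarrow> ('m \<Rightarrow> 'k) \<Rightarrow> bool" where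
  "lin_to_R R M f \<longleftrightarrow>
     (\<forall>x\<in>carrier M. f x \<in> R) \<and>
     (\<forall>x\<in>carrier M. \<forall>y\<in>carrier M. f (x \<oplus>\<^bsub>M\<^esub> y) = f x + f y) \<and>
     (\<forall>a\<in>R. \<forall>x\<in>carrier M. f (a \<odot>\<^bsub>M\<^esub> x) = a * f x)"

definition trace_of :: "'k::field set \<Rightarrow> ('k, 'm) module \<Rightarrow> 'k set" where
  "trace_of R M = {t. \<exists>(N::nat) f x. (\<forall>k<N. lin_to_R R M (f k) \<and> x k \<in> carrier M) \<and>
                        t = (\<Sum>k<N. f k (x k))}"

text \<open>Trace ideals: traces of R-modules (with carrier in the type 'm, fixed via the
  itself-argument).\<close>
definition is_trace_ideal :: "'m itself \<Rightarrow> 'k::field set \<Rightarrow> 'k set \<Rightarrow> bool" where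
  "is_trace_ideal _ R I \<longleftrightarrow> (\<exists>M :: ('k, 'm) module. module (ringR R) M \<and> I = trace_of R M)"

text \<open>T(R): the nonzero trace ideals, using modules with carrier in 'k (every trace ideal I
  is the trace of the module I itself, so this is all of T(R)).\<close>
definition trace_ideals :: "'k::field set \<Rightarrow> 'k set set" where
  "trace_ideals R = {I. is_trace_ideal TYPE('k) R I \<and> I \<noteq> {0}}"

end

theory Submission
  imports Defs
begin

text \<open>Let \<open>p = q + \<alpha> q'\<close>, so \<open>v(p) = a\<^sub>i\<close> and \<open>J\<^sub>\<alpha> = (p) + I\<^sub>i\<^sub>+\<^sub>2\<close>. The trace of an ideal
  \<open>J\<close> is \<open>(R : J) J\<close>, so \<open>J\<^sub>\<alpha>\<close> is a trace ideal once every \<open>y\<close> with \<open>y J\<^sub>\<alpha> \<subseteq> R\<close> stabilises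
  \<open>J\<^sub>\<alpha>\<close>. Such a \<open>y\<close> has nonnegative value (otherwise it would produce the gap \<open>a\<^sub>n - 1\<close> of
  \<open>v(R)\<close>), so \<open>y = r + w\<close> with \<open>r \<in> R\<close> and \<open>v(w) > 0\<close>, because \<open>k \<cong> R\<^sub>b\<^sub>a\<^sub>r/n\<close>. Write
  \<open>w p \<equiv> u q' mod I\<^sub>i\<^sub>+\<^sub>2\<close>. If \<open>u\<close> were a unit, \<open>g = w p / q'\<close> would be a unit stabilising
  \<open>I\<^sub>i\<^sub>+\<^sub>3\<close> (as \<open>I\<^sub>i\<^sub>+\<^sub>1 I\<^sub>i\<^sub>+\<^sub>3 = q' I\<^sub>i\<^sub>+\<^sub>3\<close>), and this forces
  \<open>I\<^sub>i I\<^sub>i\<^sub>+\<^sub>2 = p I\<^sub>i\<^sub>+\<^sub>2 = q I\<^sub>i\<^sub>+\<^sub>2\<close>, contrary to the hypothesis. Hence \<open>w p \<in> I\<^sub>i\<^sub>+\<^sub>2\<close> and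
  \<open>w J\<^sub>\<alpha> \<subseteq> J\<^sub>\<alpha>\<close>. The same contradiction shows that \<open>J\<^sub>\<beta> \<subseteq> J\<^sub>\<alpha>\<close> forces
  \<open>\<alpha> \<equiv> \<beta> mod m\<close>, so distinct residue classes give distinct trace ideals.\<close>

definition is_submodule :: "'k::field set \<Rightarrow> 'k set \<Rightarrow> bool" where
  "is_submodule R M \<longleftrightarrow> 0 \<in> M \<and> (\<forall>x\<in>M. \<forall>y\<in>M. x + y \<in> M) \<and> (\<forall>r\<in>R. \<forall>x\<in>M. r * x \<in> M)"

lemma is_submoduleI:
  "0 \<in> M \<Longrightarrow> (\<And>x y. x \<in> M \<Longrightarrow> y \<in> M \<Longrightarrow> x + y \<in> M) \<Longrightarrow>
    (\<And>r x. r \<in> R \<Longrightarrow> x \<in> M \<Longrightarrow> r * x \<in> M) \<Longrightarrow> is_submodule R M"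
  unfolding is_submodule_def by blast

lemma submodule_zero: "is_submodule R M \<Longrightarrow> 0 \<in> M"
  and submodule_add: "is_submodule R M \<Longrightarrow> x \<in> M \<Longrightarrow> y \<in> M \<Longrightarrow> x + y \<in> M"
  and submodule_smult: "is_submodule R M \<Longrightarrow> r \<in> R \<Longrightarrow> x \<in> M \<Longrightarrow> r * x \<in> M"
  unfolding is_submodule_def by blast+

lemma submodule_sum:
  "is_submodule R M \<Longrightarrow> (\<And>k. k < N \<Longrightarrow> f k \<in> M) \<Longrightarrow> (\<Sum>k<(N::nat). f k) \<in> M"
  by (induction N) (auto intro: submodule_zero submodule_add)

lemma elt_times_iff: "x \<in> elt_times y A \<longleftrightarrow> (\<exists>a\<in>A. x = y * a)"
  unfolding elt_times_def by blast

lemma elt_times_subset_iff: "elt_times y A \<subseteq> B \<longleftrightarrow> (\<forall>x\<in>A. y * x \<in> B)"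
  unfolding elt_times_def by blast

lemma is_submodule_elt_times: "is_submodule R M \<Longrightarrow> is_submodule R (elt_times y M)"
proof (rule is_submoduleI)
  assume M: "is_submodule R M"
  show "0 \<in> elt_times y M"
    using submodule_zero[OF M] by (auto simp: elt_times_iff intro!: bexI[of _ 0])
  show "a + b \<in> elt_times y M" if "a \<in> elt_times y M" "b \<in> elt_times y M" for a b
    using that submodule_add[OF M] by (auto simp: elt_times_iff simp flip: distrib_left)
  show "r * a \<in> elt_times y M" if "r \<in> R" "a \<in> elt_times y M" for r a
    using that submodule_smult[OF M] by (auto simp: elt_times_iff mult.left_commute)
qed

lemma elt_times_subset_elt_times:
  assumes "Q \<noteq> 0" "elt_times (P / Q) M \<subseteq> M"
  shows "elt_times P M \<subseteq> elt_times Q M"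
proof
  fix z assume "z \<in> elt_times P M"
  then obtain t where t: "t \<in> M" "z = P * t" by (auto simp: elt_times_iff)
  then have "P / Q * t \<in> M" using assms(2) by (auto simp: elt_times_subset_iff)
  moreover have "z = Q * (P / Q * t)" using t(2) assms(1) by simp
  ultimately show "z \<in> elt_times Q M" unfolding elt_times_iff by (rule bexI[rotated])
qed

lemma finite_image_factor:
  assumes "finite (f ` A)" and "\<And>x y. x \<in> A \<Longrightarrow> y \<in> A \<Longrightarrow> f x = f y \<Longrightarrow> g x = g y"
  shows "finite (g ` A)"
proof -
  have "g x = g (inv_into A f (f x))" if "x \<in> A" for x
  proof -
    have fx: "f x \<in> f ` A" using that by simp
    show ?thesis
      using assms(2)[OF that inv_into_into[OF fx]] f_inv_into_f[OF fx] by simp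
  qed
  then have "g ` A = (g \<circ> inv_into A f) ` f ` A"
    unfolding image_comp by (intro image_cong) auto
  then show ?thesis using assms(1) by simp
qed

lemma mult_mem_ideal_prod: "a \<in> A \<Longrightarrow> b \<in> B \<Longrightarrow> a * b \<in> ideal_prod A B"
  unfolding ideal_prod_def
  by (intro CollectI exI[of _ "1::nat"] exI[of _ "\<lambda>_. a"] exI[of _ "\<lambda>_. b"]) auto

lemma ideal_prod_subset:
  assumes "is_submodule R C" and "\<And>a b. a \<in> A \<Longrightarrow> b \<in> B \<Longrightarrow> a * b \<in> C"
  shows "ideal_prod A B \<subseteq> C"
  using assms unfolding ideal_prod_def by (auto intro!: submodule_sum)

lemma ideal_prod_subset_elt_timesD:
  assumes "ideal_prod A B \<subseteq> elt_times Q B" "Q \<noteq> 0" "a \<in> A" "b \<in> B"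
  shows "a / Q * b \<in> B"
proof -
  obtain c where "c \<in> B" "a * b = Q * c"
    using subsetD[OF assms(1) mult_mem_ideal_prod[OF assms(3,4)]] by (auto simp: elt_times_iff)
  then show ?thesis using \<open>Q \<noteq> 0\<close> by (simp add: field_simps)
qed

locale field_subring =
  fixes R :: "'k::field set"
  assumes is_subring: "is_subring R"
begin

lemma subring_zero [simp]: "0 \<in> R"
  and subring_one [simp]: "1 \<in> R"
  and subring_add: "x \<in> R \<Longrightarrow> y \<in> R \<Longrightarrow> x + y \<in> R"
  and subring_diff: "x \<in> R \<Longrightarrow> y \<in> R \<Longrightarrow> x - y \<in> R"
  and subring_mult: "x \<in> R \<Longrightarrow> y \<in> R \<Longrightarrow> x * y \<in> R"
  using is_subring unfolding is_subring_def by blast+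

lemma subring_uminus: "x \<in> R \<Longrightarrow> - x \<in> R"
  using subring_diff[of 0 x] by simp

lemma subring_power: "x \<in> R \<Longrightarrow> x ^ k \<in> R"
  by (induction k) (auto intro: subring_mult)

lemma subring_prod: "finite G \<Longrightarrow> (\<And>g. g \<in> G \<Longrightarrow> f g \<in> R) \<Longrightarrow> prod f G \<in> R"
  by (induction G rule: finite_induct) (auto intro: subring_mult)

lemma subring_sum: "finite G \<Longrightarrow> (\<And>g. g \<in> G \<Longrightarrow> f g \<in> R) \<Longrightarrow> sum f G \<in> R"
  by (induction G rule: finite_induct) (auto intro: subring_add)

lemma is_submodule_self: "is_submodule R R"
  by (rule is_submoduleI) (auto intro: subring_add subring_mult)

lemma submodule_uminus: "is_submodule R M \<Longrightarrow> x \<in> M \<Longrightarrow> - x \<in> M"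
  using submodule_smult[of R M "-1" x] subring_uminus[OF subring_one] by simp

lemma submodule_diff: "is_submodule R M \<Longrightarrow> x \<in> M \<Longrightarrow> y \<in> M \<Longrightarrow> x - y \<in> M"
  using submodule_add[of R M x "- y"] submodule_uminus by simp

lemma mem_int_closure: "r \<in> R \<Longrightarrow> r \<in> int_closure R"
  unfolding int_closure_def integral_over_def
  by (intro CollectI exI[of _ 1] exI[of _ "\<lambda>_. - r"]) (auto intro: subring_uminus)

text \<open>Multiplying an integral equation of \<open>e\<^sup>-\<^sup>1\<close> of degree \<open>m + 1\<close> by \<open>e\<^sup>m\<close>
  writes \<open>e\<^sup>-\<^sup>1\<close> as a polynomial in \<open>e\<close> with coefficients in \<open>R\<close>.\<close>
lemma integral_inverse_stable:
  assumes M: "is_submodule R M" and stable: "elt_times e M \<subseteq> M" and "e \<noteq> 0"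
    and integral: "integral_over R (inverse e)"
  shows "elt_times (inverse e) M \<subseteq> M"
proof -
  obtain d c where c: "\<And>k. k < d \<Longrightarrow> c k \<in> R"
    and eq: "inverse e ^ d + (\<Sum>k<d. c k * inverse e ^ k) = 0"
    using integral unfolding integral_over_def by blast
  have "d \<noteq> 0" using eq by (cases d) auto
  then obtain m where d: "d = Suc m" using not0_implies_Suc by blast
  have pow: "inverse e ^ k * e ^ m = e ^ (m - k)" if "k \<le> m" for k
    using that \<open>e \<noteq> 0\<close> by (simp add: power_diff power_inverse field_simps)
  have "0 = (inverse e ^ d + (\<Sum>k<d. c k * inverse e ^ k)) * e ^ m"
    using eq by simp
  also have "\<dots> = inverse e + (\<Sum>k<d. c k * e ^ (m - k))"
    using d pow by (simp add: distrib_right sum_distrib_right mult.assoc)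
  finally have inv: "inverse e = - (\<Sum>k<d. c k * e ^ (m - k))"
    by (simp add: eq_neg_iff_add_eq_0)
  have pow_mem: "e ^ j * x \<in> M" if "x \<in> M" for j x
    using that stable by (induction j) (auto simp: elt_times_subset_iff mult.assoc)
  show ?thesis
  proof (unfold elt_times_subset_iff, intro ballI)
    fix x assume "x \<in> M"
    have "inverse e * x = - (\<Sum>k<d. c k * (e ^ (m - k) * x))"
      by (simp add: inv sum_distrib_right mult.assoc)
    also have "\<dots> \<in> M"
      using submodule_smult[OF M c pow_mem[OF \<open>x \<in> M\<close>]]
      by (intro submodule_uminus[OF M] submodule_sum[OF M])
    finally show "inverse e * x \<in> M" .
  qed
qed

lemma cring_ringR: "cring (ringR R)"
proof (rule cringI)
  show "abelian_group (ringR R)"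
    by (rule abelian_groupI)
      (auto simp: ringR_def algebra_simps intro: subring_add subring_mult subring_uminus
        intro!: bexI[of _ "- x" for x])
  show "comm_monoid (ringR R)"
    by (rule comm_monoidI) (auto simp: ringR_def algebra_simps intro: subring_mult)
qed (auto simp: ringR_def algebra_simps)

definition ideal_module :: "'k set \<Rightarrow> ('k, 'k) module" where
  "ideal_module J = \<lparr>carrier = J, mult = (*), one = 1, zero = 0, add = (+), smult = (*)\<rparr>"

lemma module_ideal_module: "is_submodule R J \<Longrightarrow> module (ringR R) (ideal_module J)"
proof (rule moduleI)
  show "cring (ringR R)" by (rule cring_ringR)
  assume J: "is_submodule R J"
  show "abelian_group (ideal_module J)"
    by (rule abelian_groupI)
      (auto simp: ideal_module_def algebra_simps submodule_zero[OF J] submodule_add[OF J]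
        intro!: bexI[of _ "- x" for x] submodule_uminus[OF J])
qed (auto simp: ideal_module_def ringR_def algebra_simps cring_ringR intro: submodule_smult)

text \<open>By linearity, \<open>p f(x) = f(p x) = x f(p)\<close>.\<close>
lemma lin_to_R_ideal_module_eq:
  assumes "J \<subseteq> R" "p \<in> J" "p \<noteq> 0" and f: "lin_to_R R (ideal_module J) f" and "x \<in> J"
  shows "f x = f p / p * x"
proof -
  have "p * f x = f (p * x)" and "x * f p = f (x * p)"
    using f assms(1,2,5) unfolding lin_to_R_def ideal_module_def by auto
  then have "p * f x = x * f p" by (simp add: mult.commute)
  then show ?thesis using \<open>p \<noteq> 0\<close> by (simp add: field_simps)
qed

text \<open>The trace of an ideal \<open>J\<close> is \<open>(R : J) J\<close>, so \<open>J\<close> is a trace ideal as soon as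
  \<open>(R : J) \<subseteq> (J : J)\<close>.\<close>
lemma trace_of_ideal_module:
  assumes J: "is_submodule R J" "J \<subseteq> R" and p: "p \<in> J" "p \<noteq> 0"
    and colon: "\<And>y. elt_times y J \<subseteq> R \<Longrightarrow> elt_times y J \<subseteq> J"
  shows "trace_of R (ideal_module J) = J"
proof
  have "f x \<in> J" if f: "lin_to_R R (ideal_module J) f" and "x \<in> J" for f x
  proof -
    have "elt_times (f p / p) J \<subseteq> R"
      using f lin_to_R_ideal_module_eq[OF J(2) p f]
      by (auto simp: elt_times_subset_iff lin_to_R_def ideal_module_def)
    then have "f p / p * x \<in> J"
      using colon[of "f p / p"] \<open>x \<in> J\<close> unfolding elt_times_subset_iff by blast
    then show ?thesis
      using lin_to_R_ideal_module_eq[OF J(2) p f \<open>x \<in> J\<close>] by simp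
  qed
  then show "trace_of R (ideal_module J) \<subseteq> J"
    unfolding trace_of_def by (auto simp: ideal_module_def intro!: submodule_sum[OF J(1)])
  have "lin_to_R R (ideal_module J) (\<lambda>x. x)"
    using J(2) unfolding lin_to_R_def ideal_module_def by auto
  then show "J \<subseteq> trace_of R (ideal_module J)"
    unfolding trace_of_def
    by (auto simp: ideal_module_def intro!: exI[of _ "1::nat"] exI[of _ "\<lambda>_ x. x"])
qed

lemma trace_idealsI:
  assumes "is_submodule R J" "J \<subseteq> R" "p \<in> J" "p \<noteq> 0"
    and "\<And>y. elt_times y J \<subseteq> R \<Longrightarrow> elt_times y J \<subseteq> J"
  shows "J \<in> trace_ideals R"
  using assms module_ideal_module trace_of_ideal_module[OF assms]
  unfolding trace_ideals_def is_trace_ideal_def by fastforce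

lemma plus_principal_iff: "x \<in> plus_principal R p M \<longleftrightarrow> (\<exists>r\<in>R. \<exists>y\<in>M. x = r * p + y)"
  unfolding plus_principal_def by blast

lemma is_submodule_plus_principal:
  assumes M: "is_submodule R M"
  shows "is_submodule R (plus_principal R p M)"
proof (rule is_submoduleI)
  show "0 \<in> plus_principal R p M"
    using submodule_zero[OF M] unfolding plus_principal_iff by force
  show "x + x' \<in> plus_principal R p M"
    if x: "x \<in> plus_principal R p M" and x': "x' \<in> plus_principal R p M" for x x'
  proof -
    obtain r y r' y' where "r \<in> R" "y \<in> M" "x = r * p + y" "r' \<in> R" "y' \<in> M" "x' = r' * p + y'"
      using x x' unfolding plus_principal_iff by blast
    moreover have "x + x' = (r + r') * p + (y + y')"
      using calculation by (simp add: algebra_simps)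
    ultimately show ?thesis
      unfolding plus_principal_iff
      by (intro bexI[of _ "r + r'"] bexI[of _ "y + y'"]) (auto intro: subring_add submodule_add[OF M])
  qed
  show "c * x \<in> plus_principal R p M" if c: "c \<in> R" and x: "x \<in> plus_principal R p M" for c x
  proof -
    obtain r y where "r \<in> R" "y \<in> M" "x = r * p + y"
      using x unfolding plus_principal_iff by blast
    moreover have "c * x = (c * r) * p + c * y"
      using calculation by (simp add: algebra_simps)
    ultimately show ?thesis
      unfolding plus_principal_iff using c
      by (intro bexI[of _ "c * r"] bexI[of _ "c * y"]) (auto intro: subring_mult submodule_smult[OF M])
  qed
qed

lemma plus_principal_subset: "p \<in> R \<Longrightarrow> M \<subseteq> R \<Longrightarrow> plus_principal R p M \<subseteq> R"
  by (auto simp: plus_principal_iff intro!: subring_add subring_mult)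

lemma generator_mem_plus_principal: "0 \<in> M \<Longrightarrow> p \<in> plus_principal R p M"
  unfolding plus_principal_iff by (intro bexI[of _ 1] bexI[of _ 0]) auto

lemma subset_plus_principal: "M \<subseteq> plus_principal R p M"
proof
  fix x assume "x \<in> M"
  then show "x \<in> plus_principal R p M"
    unfolding plus_principal_iff by (intro bexI[of _ 0] bexI[of _ x]) auto
qed

end

section \<open>Discrete valuations\<close>

locale normalized_valuation =
  fixes V :: "'k::field set" and v :: "'k \<Rightarrow> int"
  assumes normalized_valuation: "normalized_valuation_of V v"
begin

lemma val_mult: "x \<noteq> 0 \<Longrightarrow> y \<noteq> 0 \<Longrightarrow> v (x * y) = v x + v y"
  and val_add_ge: "x \<noteq> 0 \<Longrightarrow> y \<noteq> 0 \<Longrightarrow> x + y \<noteq> 0 \<Longrightarrow> min (v x) (v y) \<le> v (x + y)"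
  and val_surj: "\<exists>x. x \<noteq> 0 \<and> v x = z"
  and valuation_ring_iff: "x \<in> V \<longleftrightarrow> x = 0 \<or> 0 \<le> v x"
  using normalized_valuation unfolding normalized_valuation_of_def by blast+

lemma val_one [simp]: "v 1 = 0"
  using val_mult[of 1 1] by simp

lemma val_inverse: "x \<noteq> 0 \<Longrightarrow> v (inverse x) = - v x"
  using val_mult[of x "inverse x"] by simp

lemma val_divide: "x \<noteq> 0 \<Longrightarrow> y \<noteq> 0 \<Longrightarrow> v (x / y) = v x - v y"
  using val_mult[of x "inverse y"] val_inverse[of y] by (simp add: divide_inverse)

lemma val_uminus [simp]: "v (- x) = v x"
proof (cases "x = 0")
  case False
  have "v (-1) = 0" using val_mult[of "-1" "-1"] by simp
  then show ?thesis using val_mult[of "-1" x] False by simp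
qed simp

lemma val_power: "x \<noteq> 0 \<Longrightarrow> v (x ^ k) = int k * v x"
  by (induction k) (auto simp: val_mult algebra_simps)

lemma val_diff_ge: "x \<noteq> 0 \<Longrightarrow> y \<noteq> 0 \<Longrightarrow> x - y \<noteq> 0 \<Longrightarrow> min (v x) (v y) \<le> v (x - y)"
  using val_add_ge[of x "- y"] by simp

lemma val_add_eq_of_less:
  assumes "x \<noteq> 0" and "y = 0 \<or> v x < v y"
  shows "x + y \<noteq> 0" and "v (x + y) = v x"
proof -
  show "x + y \<noteq> 0"
  proof
    assume "x + y = 0"
    then have "y = - x" by (simp add: eq_neg_iff_add_eq_0 add.commute)
    then show False using assms by simp
  qed
  show "v (x + y) = v x"
  proof (cases "y = 0")
    case False
    with assms have "v x < v y" by simp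
    have "min (v x) (v y) \<le> v (x + y)"
      using val_add_ge assms(1) False \<open>x + y \<noteq> 0\<close> by blast
    moreover have "min (v (x + y)) (v y) \<le> v (x + y - y)"
      using val_diff_ge[of "x + y" y] \<open>x + y \<noteq> 0\<close> False assms(1) by simp
    ultimately show ?thesis using \<open>v x < v y\<close> by auto
  qed simp
qed

end

section \<open>The value semigroup and the ideals \<open>I\<^sub>j\<close>\<close>

locale analytically_irreducible_domain =
  field_subring R + normalized_valuation "int_closure R" v
  for R :: "'k::field set" and v :: "'k \<Rightarrow> int" +
  assumes frac_field: "is_frac_field_of R"
    and closure_fin_gen: "fin_gen_over R (int_closure R)"
    and residue_iso: "residue_iso R v"
begin

lemma val_nonneg: "r \<in> R \<Longrightarrow> r \<noteq> 0 \<Longrightarrow> 0 \<le> v r"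
  using mem_int_closure valuation_ring_iff by blast

lemma integral_over_if_val_nonneg: "0 \<le> v x \<Longrightarrow> integral_over R x"
  using valuation_ring_iff unfolding int_closure_def by blast

lemma residue_lift: "0 \<le> v x \<Longrightarrow> \<exists>r\<in>R. x = r \<or> 0 < v (x - r)"
  using residue_iso valuation_ring_iff unfolding residue_iso_def val_maxideal_def by force

lemma inverse_mem_if_val_zero:
  assumes "r \<in> R" "r \<noteq> 0" "v r = 0"
  shows "inverse r \<in> R"
proof -
  have "elt_times r R \<subseteq> R"
    using assms(1) by (auto simp: elt_times_subset_iff intro: subring_mult)
  then have "elt_times (inverse r) R \<subseteq> R"
    using assms integral_over_if_val_nonneg val_inverse
    by (intro integral_inverse_stable[OF is_submodule_self]) auto
  then show ?thesis by (auto simp: elt_times_subset_iff dest: bspec[of R _ 1])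
qed

lemma maxideal_iff: "x \<in> maxideal R \<longleftrightarrow> x \<in> R \<and> (x = 0 \<or> 0 < v x)"
proof
  assume "x \<in> maxideal R"
  then have "x \<in> R" and non_unit: "\<not> (\<exists>s\<in>R. x * s = 1)"
    unfolding maxideal_def by auto
  moreover have "\<not> (x \<noteq> 0 \<and> v x = 0)"
    using non_unit inverse_mem_if_val_zero[OF \<open>x \<in> R\<close>] by (metis right_inverse)
  then have "x = 0 \<or> 0 < v x"
    using val_nonneg[OF \<open>x \<in> R\<close>] by force
  ultimately show "x \<in> R \<and> (x = 0 \<or> 0 < v x)" by blast
next
  assume x: "x \<in> R \<and> (x = 0 \<or> 0 < v x)"
  have "v x + v s = 0" if "s \<in> R" "x * s = 1" for s
    using that val_mult[of x s] by (metis mult_zero_left mult_zero_right val_one zero_neq_one)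
  then show "x \<in> maxideal R"
    using x val_nonneg unfolding maxideal_def by fastforce
qed

lemma not_in_maxideal_iff: "r \<in> R \<Longrightarrow> r \<notin> maxideal R \<longleftrightarrow> r \<noteq> 0 \<and> v r = 0"
  using maxideal_iff val_nonneg by force

lemma zero_mem_maxideal [simp]: "0 \<in> maxideal R"
  by (simp add: maxideal_iff)

lemma maxideal_mult:
  assumes "r \<in> R" "x \<in> maxideal R"
  shows "r * x \<in> maxideal R"
proof (cases "r = 0 \<or> x = 0")
  case False
  then show ?thesis
    using assms val_mult[of r x] val_nonneg[of r] by (auto simp: maxideal_iff intro: subring_mult)
qed auto

lemma maxideal_diff:
  assumes "x \<in> maxideal R" "y \<in> maxideal R"
  shows "x - y \<in> maxideal R"
proof (cases "x = 0 \<or> y = 0 \<or> x = y")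
  case True
  then show ?thesis using assms by (auto simp: maxideal_iff intro: subring_uminus)
next
  case False
  then show ?thesis
    using assms val_diff_ge[of x y] by (auto simp: maxideal_iff intro: subring_diff)
qed

lemma valsemi_iff: "s \<in> valsemi R v \<longleftrightarrow> (\<exists>r\<in>R. r \<noteq> 0 \<and> v r = s)"
  unfolding valsemi_def by auto

lemma val_mem_valsemi: "r \<in> R \<Longrightarrow> r \<noteq> 0 \<Longrightarrow> v r \<in> valsemi R v"
  by (auto simp: valsemi_iff)

lemma valsemi_nonneg: "s \<in> valsemi R v \<Longrightarrow> 0 \<le> s"
  using valsemi_iff val_nonneg by auto

lemma exists_val_pos: "\<exists>r\<in>R. r \<noteq> 0 \<and> 0 < v r"
proof -
  obtain x where x: "x \<noteq> 0" "v x = 1" using val_surj by blast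
  obtain a b where ab: "a \<in> R" "b \<in> R" "b \<noteq> 0" "x = a / b"
    using frac_field unfolding is_frac_field_of_def by blast
  then have "a \<noteq> 0" and "v a = 1 + v b"
    using x val_divide[of a b] by auto
  then show ?thesis using ab val_nonneg[of b] by auto
qed

lemma infinite_valsemi: "infinite (nat ` valsemi R v)"
  unfolding infinite_nat_iff_unbounded_le
proof
  fix m :: nat
  obtain r where r: "r \<in> R" "r \<noteq> 0" "0 < v r" using exists_val_pos by blast
  have "v (r ^ m) \<in> valsemi R v"
    using r by (auto simp: valsemi_iff intro!: bexI[of _ "r ^ m"] subring_power)
  moreover have "int m \<le> v (r ^ m)"
    using r val_power[of r m] by (simp add: mult_le_cancel_left1)
  ultimately show "\<exists>n\<ge>m. n \<in> nat ` valsemi R v"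
    by (intro exI[of _ "nat (v (r ^ m))"]) auto
qed

lemma aseq_in_valsemi: "aseq R v j \<in> valsemi R v"
proof -
  have "enumerate (nat ` valsemi R v) j \<in> nat ` valsemi R v"
    using enumerate_in_set[OF infinite_valsemi] .
  then show ?thesis unfolding aseq_def using valsemi_nonneg by auto
qed

lemma aseq_less_iff: "aseq R v j < aseq R v k \<longleftrightarrow> j < k"
  unfolding aseq_def using enumerate_mono_iff[OF infinite_valsemi] by simp

lemma aseq_le_iff: "aseq R v j \<le> aseq R v k \<longleftrightarrow> j \<le> k"
  unfolding aseq_def using enumerate_mono_le_iff[OF infinite_valsemi] by simp

lemma of_nat_le_aseq: "int j \<le> aseq R v j"
  unfolding aseq_def using le_enumerate[OF infinite_valsemi] by simp

lemma aseq_Suc_le: "s \<in> valsemi R v \<Longrightarrow> aseq R v j < s \<Longrightarrow> aseq R v (Suc j) \<le> s"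
proof -
  assume s: "s \<in> valsemi R v" and less: "aseq R v j < s"
  obtain k where "enumerate (nat ` valsemi R v) k = nat s"
    using s enumerate_Ex[OF infinite_valsemi] by blast
  then have "aseq R v k = s" unfolding aseq_def using valsemi_nonneg[OF s] by simp
  then show ?thesis using less aseq_less_iff aseq_le_iff by (metis Suc_leI)
qed

text \<open>A common denominator of a finite generating set of the integral closure.\<close>
lemma conductor_element: "\<exists>c\<in>R. c \<noteq> 0 \<and> elt_times c (int_closure R) \<subseteq> R"
proof -
  obtain G where G: "finite G"
    "int_closure R = {x. \<exists>a. (\<forall>g\<in>G. a g \<in> R) \<and> x = (\<Sum>g\<in>G. a g * g)}"
    using closure_fin_gen unfolding fin_gen_over_def by blast
  obtain num den where frac: "\<And>x. num x \<in> R \<and> den x \<in> R \<and> den x \<noteq> 0 \<and> x = num x / den x"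
    using frac_field unfolding is_frac_field_of_def by metis
  define c where "c = prod den G"
  have "c * g \<in> R" if "g \<in> G" for g
  proof -
    have "den g * g = num g"
      using frac[of g] by (metis nonzero_mult_div_cancel_left times_divide_eq_right)
    moreover have "c * g = den g * g * prod den (G - {g})"
      using prod.remove[OF G(1) that, of den] by (simp add: c_def ac_simps)
    ultimately have "c * g = num g * prod den (G - {g})" by simp
    then show ?thesis using G(1) frac by (auto intro: subring_mult subring_prod)
  qed
  then have "c * (\<Sum>g\<in>G. a g * g) \<in> R" if "\<forall>g\<in>G. a g \<in> R" for a
    using that G(1) unfolding sum_distrib_left mult.left_commute[of c]
    by (auto intro!: subring_sum intro: subring_mult)
  moreover have "c \<in> R" "c \<noteq> 0"
    using G(1) frac by (auto simp: c_def intro: subring_prod)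
  ultimately show ?thesis
    by (auto simp: G(2) elt_times_subset_iff)
qed

lemma valsemi_eventually: "\<exists>c. \<forall>m\<ge>c. m \<in> valsemi R v"
proof -
  obtain c where c: "c \<in> R" "c \<noteq> 0" "elt_times c (int_closure R) \<subseteq> R"
    using conductor_element by blast
  have "m \<in> valsemi R v" if "v c \<le> m" for m
  proof -
    obtain x where x: "x \<noteq> 0" "v x = m - v c" using val_surj by blast
    then have "c * x \<in> R"
      using c(3) that valuation_ring_iff by (auto simp: elt_times_subset_iff)
    then show ?thesis
      using x c(2) val_mult[of c x] by (auto simp: valsemi_iff intro!: bexI[of _ "c * x"])
  qed
  then show ?thesis by blast
qed

lemma aseq_cond_index_add: "aseq R v (cond_index R v + j) = aseq R v (cond_index R v) + int j"
proof -
  have "\<exists>n. \<forall>j. aseq R v (n + j) = aseq R v n + int j"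
  proof -
    obtain c where c: "\<forall>m\<ge>c. m \<in> valsemi R v" using valsemi_eventually by blast
    define n where "n = nat c"
    have "aseq R v (n + j) = aseq R v n + int j" for j
    proof (induction j)
      case (Suc j)
      have "c \<le> aseq R v (n + j) + 1"
        using of_nat_le_aseq[of "n + j"] n_def by linarith
      then have "aseq R v (Suc (n + j)) \<le> aseq R v (n + j) + 1"
        using c aseq_Suc_le by simp
      moreover have "aseq R v (n + j) < aseq R v (Suc (n + j))"
        using aseq_less_iff by simp
      ultimately show ?case using Suc by simp
    qed simp
    then show ?thesis by blast
  qed
  then show ?thesis unfolding cond_index_def by (rule LeastI_ex[THEN spec])
qed

lemma mem_valsemi_if_ge_conductor: "aseq R v (cond_index R v) \<le> m \<Longrightarrow> m \<in> valsemi R v"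
  using aseq_cond_index_add[of "nat (m - aseq R v (cond_index R v))"]
    aseq_in_valsemi[of "cond_index R v + nat (m - aseq R v (cond_index R v))"]
  by simp

text \<open>Otherwise \<open>a\<^sub>n\<^sub>-\<^sub>1 = a\<^sub>n - 1\<close> and \<open>n - 1\<close> would already have the defining property of \<open>n\<close>.\<close>
lemma conductor_pred_notin_valsemi:
  assumes "0 < cond_index R v"
  shows "aseq R v (cond_index R v) - 1 \<notin> valsemi R v"
proof
  let ?n = "cond_index R v"
  assume "aseq R v ?n - 1 \<in> valsemi R v"
  moreover have "aseq R v (?n - 1) < aseq R v ?n"
    using assms aseq_less_iff by simp
  ultimately have "aseq R v (?n - 1) = aseq R v ?n - 1"
    using aseq_Suc_le[of "aseq R v ?n - 1" "?n - 1"] assms by fastforce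
  then have "\<forall>j. aseq R v (?n - 1 + j) = aseq R v (?n - 1) + int j"
  proof (intro allI)
    fix j
    show "aseq R v (?n - 1 + j) = aseq R v (?n - 1) + int j"
    proof (cases j)
      case (Suc k)
      then show ?thesis
        using assms aseq_cond_index_add[of k] \<open>aseq R v (?n - 1) = aseq R v ?n - 1\<close> by simp
    qed simp
  qed
  then have "?n \<le> ?n - 1"
    unfolding cond_index_def by (rule Least_le)
  then show False using assms by simp
qed

abbreviation I :: "nat \<Rightarrow> 'k set" where
  "I j \<equiv> Iideal R v j"

lemma Iideal_iff: "x \<in> I j \<longleftrightarrow> x \<in> R \<and> (x = 0 \<or> aseq R v j \<le> v x)"
  unfolding Iideal_def by auto

lemma Iideal_zero [simp]: "0 \<in> I j"
  by (simp add: Iideal_iff)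

lemma Iideal_subset: "I j \<subseteq> R"
  using Iideal_iff by blast

lemma is_submodule_Iideal: "is_submodule R (I j)"
proof (rule is_submoduleI)
  show "x + y \<in> I j" if "x \<in> I j" "y \<in> I j" for x y
    using that val_add_ge[of x y] by (cases "x = 0 \<or> y = 0 \<or> x + y = 0")
      (auto simp: Iideal_iff intro: subring_add)
  show "r * x \<in> I j" if "r \<in> R" "x \<in> I j" for r x
  proof (cases "r = 0 \<or> x = 0")
    case False
    then show ?thesis
      using that val_mult[of r x] val_nonneg[of r] by (auto simp: Iideal_iff intro: subring_mult)
  qed auto
qed simp

lemma Iideal_antimono: "j \<le> k \<Longrightarrow> I k \<subseteq> I j"
  using aseq_le_iff[of j k] by (auto simp: Iideal_iff)

lemma Iideal_SucI: "x \<in> R \<Longrightarrow> x \<noteq> 0 \<Longrightarrow> aseq R v j < v x \<Longrightarrow> x \<in> I (Suc j)"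
  using aseq_Suc_le[OF val_mem_valsemi] by (simp add: Iideal_iff)

text \<open>This is where \<open>k \<cong> R\<^sub>b\<^sub>a\<^sub>r/n\<close> enters: the leading coefficient of \<open>x / Q\<close> lifts to \<open>R\<close>.\<close>
lemma Iideal_peel:
  assumes Q: "Q \<in> R" "Q \<noteq> 0" "v Q = aseq R v j" and x: "x \<in> I j"
  shows "\<exists>r\<in>R. x - r * Q \<in> I (Suc j)"
proof (cases "x = 0")
  case True
  then show ?thesis by (intro bexI[of _ 0]) auto
next
  case False
  then have "0 \<le> v (x / Q)" using x Q val_divide by (simp add: Iideal_iff)
  then obtain r where r: "r \<in> R" "x / Q = r \<or> 0 < v (x / Q - r)"
    using residue_lift by blast
  have eq: "x - r * Q = (x / Q - r) * Q" using Q(2) by (simp add: field_simps)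
  have "x - r * Q \<in> I (Suc j)"
  proof (cases "x / Q = r")
    case True
    then show ?thesis using eq by simp
  next
    case False
    then have "aseq R v j < v (x - r * Q)"
      using r(2) eq val_mult[of "x / Q - r" Q] Q by simp
    moreover have "x - r * Q \<noteq> 0" using eq False Q(2) by simp
    moreover have "x - r * Q \<in> R"
      using subring_diff[OF subsetD[OF Iideal_subset x] subring_mult[OF r(1) Q(1)]] .
    ultimately show ?thesis using Iideal_SucI by blast
  qed
  then show ?thesis using r(1) by blast
qed

lemma Iideal_inverse_stable:
  "elt_times e (I j) \<subseteq> I j \<Longrightarrow> e \<noteq> 0 \<Longrightarrow> v e = 0 \<Longrightarrow> elt_times (inverse e) (I j) \<subseteq> I j"
  using integral_over_if_val_nonneg[of "inverse e"] val_inverse[of e]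
  by (intro integral_inverse_stable[OF is_submodule_Iideal]) auto

lemma mult_Iideal_Suc:
  assumes "0 < v w" "elt_times w (I j) \<subseteq> R"
  shows "elt_times w (I j) \<subseteq> I (Suc j)"
  unfolding elt_times_subset_iff
proof
  fix x assume x: "x \<in> I j"
  show "w * x \<in> I (Suc j)"
  proof (cases "w = 0 \<or> x = 0")
    case False
    then have "aseq R v j < v (w * x)" using x assms(1) val_mult by (auto simp: Iideal_iff)
    then show ?thesis using assms(2) x False by (auto simp: elt_times_subset_iff intro: Iideal_SucI)
  qed (auto simp: Iideal_iff)
qed

text \<open>An element of negative value cannot multiply \<open>I\<^sub>j \<supseteq> I\<^sub>n\<close> into \<open>R\<close>: it would
  produce the gap \<open>a\<^sub>n - 1\<close> of the value semigroup.\<close>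
lemma val_nonneg_if_mult_Iideal:
  assumes "j \<le> cond_index R v" "0 < cond_index R v" "y \<noteq> 0" and y: "elt_times y (I j) \<subseteq> R"
  shows "0 \<le> v y"
proof (rule ccontr)
  let ?c = "aseq R v (cond_index R v)"
  assume "\<not> 0 \<le> v y"
  then have "?c - 1 - v y \<in> valsemi R v" by (intro mem_valsemi_if_ge_conductor) simp
  then obtain x where x: "x \<in> R" "x \<noteq> 0" "v x = ?c - 1 - v y" by (auto simp: valsemi_iff)
  have "aseq R v j \<le> ?c" using assms(1) aseq_le_iff by simp
  then have "x \<in> I j" using x \<open>\<not> 0 \<le> v y\<close> by (auto simp: Iideal_iff)
  then have "y * x \<in> R" using y by (auto simp: elt_times_subset_iff)
  then have "?c - 1 \<in> valsemi R v"
    using x assms(3) val_mult[of y x] by (auto simp: valsemi_iff intro!: bexI[of _ "y * x"])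
  then show False using conductor_pred_notin_valsemi[OF assms(2)] by simp
qed

lemma ideal_prod_Iideal_change_generator:
  assumes prod: "ideal_prod (I j) (I k) = elt_times P (I k)" and "P \<noteq> 0"
    and Q: "Q \<in> I j" "Q \<noteq> 0" "v Q = v P"
  shows "ideal_prod (I j) (I k) = elt_times Q (I k)"
proof -
  have stable: "elt_times (Q / P) (I k) \<subseteq> I k"
    using ideal_prod_subset_elt_timesD[OF equalityD1[OF prod] \<open>P \<noteq> 0\<close> Q(1)]
    by (auto simp: elt_times_subset_iff)
  moreover have "v (Q / P) = 0" using Q \<open>P \<noteq> 0\<close> val_divide by simp
  ultimately have "elt_times (P / Q) (I k) \<subseteq> I k"
    using Iideal_inverse_stable[of "Q / P"] Q(2) \<open>P \<noteq> 0\<close> by simp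
  then have "elt_times P (I k) = elt_times Q (I k)"
    using elt_times_subset_elt_times[OF Q(2)] elt_times_subset_elt_times[OF \<open>P \<noteq> 0\<close> stable]
    by blast
  then show ?thesis using prod by simp
qed

text \<open>The unit \<open>g = w P / q'\<close> stabilises \<open>I\<^sub>i\<^sub>+\<^sub>3\<close> because \<open>I\<^sub>i\<^sub>+\<^sub>1 I\<^sub>i\<^sub>+\<^sub>3 = q' I\<^sub>i\<^sub>+\<^sub>3\<close>; then
  \<open>x\<^sub>1 x\<^sub>2 = P g\<^sup>-\<^sup>1 (x\<^sub>2 / q') (w x\<^sub>1)\<close> with \<open>w x\<^sub>1 \<in> I\<^sub>i\<^sub>+\<^sub>3\<close>.\<close>
lemma Iideal_square_subset_of_unit_shift:
  assumes prod_eq: "ideal_prod (I (i + 1)) (I (i + 3)) \<subseteq> elt_times q' (I (i + 3))"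
    and q': "q' \<noteq> 0" "v q' = aseq R v (i + 1)"
    and w: "0 < v w" "elt_times w (I (i + 2)) \<subseteq> R"
    and u: "u \<in> R" "u \<notin> maxideal R"
    and shift: "w * P - u * q' \<in> I (i + 2)"
  shows "ideal_prod (I (i + 2)) (I (i + 2)) \<subseteq> elt_times P (I (i + 2))"
proof -
  define X where "X = w * P - u * q'"
  define g where "g = w * P / q'"
  have X: "X \<in> I (i + 2)" using shift by (simp add: X_def)
  have uq': "u * q' \<noteq> 0" "v (u * q') = aseq R v (i + 1)"
    using u q' val_mult[of u q'] not_in_maxideal_iff by auto
  have "X = 0 \<or> v (u * q') < v X"
    using X uq'(2) aseq_less_iff[of "i + 1" "i + 2"] by (auto simp: Iideal_iff)
  moreover have "w * P = u * q' + X" by (simp add: X_def)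
  ultimately have "w * P \<noteq> 0" "v (w * P) = aseq R v (i + 1)"
    using val_add_eq_of_less[OF uq'(1)] uq'(2) by simp_all
  then have g: "g \<noteq> 0" "v g = 0"
    using q' val_divide by (auto simp: g_def)
  have "g * z \<in> I (i + 3)" if z: "z \<in> I (i + 3)" for z
  proof -
    have "X / q' * z \<in> I (i + 3)"
      using ideal_prod_subset_elt_timesD[OF prod_eq q'(1) _ z] X Iideal_antimono[of "i + 1" "i + 2"]
      by auto
    moreover have "u * z \<in> I (i + 3)" using submodule_smult[OF is_submodule_Iideal u(1) z] .
    moreover have "g * z = u * z + X / q' * z"
      using q'(1) by (simp add: g_def X_def field_simps)
    ultimately show ?thesis using submodule_add[OF is_submodule_Iideal] by simp
  qed
  then have g_inv: "elt_times (inverse g) (I (i + 3)) \<subseteq> I (i + 3)"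
    using Iideal_inverse_stable g by (simp add: elt_times_subset_iff)
  have w_shift: "elt_times w (I (i + 2)) \<subseteq> I (i + 3)"
    using mult_Iideal_Suc[OF w] by (simp add: numeral_3_eq_3)
  show ?thesis
  proof (rule ideal_prod_subset[OF is_submodule_elt_times[OF is_submodule_Iideal]])
    fix x1 x2 assume x: "x1 \<in> I (i + 2)" "x2 \<in> I (i + 2)"
    have "x2 / q' * (w * x1) \<in> I (i + 3)"
      using ideal_prod_subset_elt_timesD[OF prod_eq q'(1)] x w_shift Iideal_antimono[of "i + 1" "i + 2"]
      by (auto simp: elt_times_subset_iff)
    then have "inverse g * (x2 / q' * (w * x1)) \<in> I (i + 2)"
      using g_inv Iideal_antimono[of "i + 2" "i + 3"] by (auto simp: elt_times_subset_iff)
    moreover have "x1 * x2 = P * (inverse g * (x2 / q' * (w * x1)))"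
      using g \<open>w * P \<noteq> 0\<close> q'(1) by (simp add: g_def field_simps)
    ultimately show "x1 * x2 \<in> elt_times P (I (i + 2))"
      unfolding elt_times_iff by (rule bexI[rotated])
  qed
qed

text \<open>Every \<open>y \<in> I\<^sub>i\<close> is \<open>r P + r' q' + z\<close> with \<open>z \<in> I\<^sub>i\<^sub>+\<^sub>2\<close>, and \<open>u q' \<equiv> w P mod I\<^sub>i\<^sub>+\<^sub>2\<close>;
  so every product lands in \<open>P I\<^sub>i\<^sub>+\<^sub>2\<close> by the previous lemma.\<close>
lemma ideal_prod_eq_elt_times_of_unit_shift:
  assumes prod_eq: "ideal_prod (I (i + 1)) (I (i + 3)) \<subseteq> elt_times q' (I (i + 3))"
    and q': "q' \<in> R" "q' \<noteq> 0" "v q' = aseq R v (i + 1)"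
    and P: "P \<in> I i" "P \<noteq> 0" "v P = aseq R v i"
    and w: "0 < v w" "elt_times w (I (i + 2)) \<subseteq> R"
    and u: "u \<in> R" "u \<notin> maxideal R"
    and shift: "w * P - u * q' \<in> I (i + 2)"
  shows "ideal_prod (I i) (I (i + 2)) = elt_times P (I (i + 2))"
proof
  let ?PI = "elt_times P (I (i + 2))"
  have PI: "is_submodule R ?PI" by (rule is_submodule_elt_times[OF is_submodule_Iideal])
  have square: "x1 * x2 \<in> ?PI" if "x1 \<in> I (i + 2)" "x2 \<in> I (i + 2)" for x1 x2
    using Iideal_square_subset_of_unit_shift[OF prod_eq q'(2,3) w u shift]
      mult_mem_ideal_prod[OF that] by blast
  have q'_mult: "q' * x \<in> ?PI" if x: "x \<in> I (i + 2)" for x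
  proof -
    have "w * x \<in> I (i + 2)"
      using mult_Iideal_Suc[OF w] x Iideal_antimono[of "i + 2" "Suc (i + 2)"]
      by (auto simp: elt_times_subset_iff)
    then have "P * (w * x) - (w * P - u * q') * x \<in> ?PI"
      using square[OF shift x] by (intro submodule_diff[OF PI]) (auto simp: elt_times_iff)
    moreover have "inverse u \<in> R" "u \<noteq> 0"
      using u inverse_mem_if_val_zero not_in_maxideal_iff by auto
    ultimately have "inverse u * (P * (w * x) - (w * P - u * q') * x) \<in> ?PI"
      by (intro submodule_smult[OF PI])
    moreover have "inverse u * (P * (w * x) - (w * P - u * q') * x) = q' * x"
      using \<open>u \<noteq> 0\<close> by (simp add: field_simps)
    ultimately show ?thesis by simp
  qed
  show "ideal_prod (I i) (I (i + 2)) \<subseteq> ?PI"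
  proof (rule ideal_prod_subset[OF PI])
    fix y x assume y: "y \<in> I i" and x: "x \<in> I (i + 2)"
    obtain r where r: "r \<in> R" "y - r * P \<in> I (Suc i)"
      using Iideal_peel[OF _ P(2,3) y] P(1) Iideal_subset by blast
    obtain r' where r': "r' \<in> R" "y - r * P - r' * q' \<in> I (i + 2)"
      using Iideal_peel[OF q'] r(2) by auto
    have "y * x = r * (P * x) + r' * (q' * x) + (y - r * P - r' * q') * x"
      by (simp add: algebra_simps)
    also have "\<dots> \<in> ?PI"
    proof -
      have "P * x \<in> ?PI" using x by (auto simp: elt_times_iff)
      then show ?thesis
        using submodule_smult[OF PI r(1)] submodule_smult[OF PI r'(1) q'_mult[OF x]]
          square[OF r'(2) x] submodule_add[OF PI] by simp
    qed
    finally show "y * x \<in> ?PI" .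
  qed
  show "?PI \<subseteq> ideal_prod (I i) (I (i + 2))"
    using P(1) by (auto simp: elt_times_iff intro: mult_mem_ideal_prod)
qed

end

section \<open>The trace ideals \<open>J\<^sub>\<alpha>\<close>\<close>

locale trace_ideal_family = analytically_irreducible_domain R v
  for R :: "'k::field set" and v :: "'k \<Rightarrow> int" +
  fixes i :: nat and q q' :: 'k
  assumes q: "q \<in> R" "q \<noteq> 0" "v q = aseq R v i"
    and q': "q' \<in> R" "q' \<noteq> 0" "v q' = aseq R v (i + 1)"
    and prod_ne: "ideal_prod (Iideal R v i) (Iideal R v (i + 2)) \<noteq> elt_times q (Iideal R v (i + 2))"
    and prod_eq: "ideal_prod (Iideal R v (i + 1)) (Iideal R v (i + 3)) = elt_times q' (Iideal R v (i + 3))"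
begin

lemma unit_shift_notin_Iideal:
  assumes "P \<in> I i" "P \<noteq> 0" "v P = aseq R v i"
    and "0 < v w" "elt_times w (I (i + 2)) \<subseteq> R" and "u \<in> R" "u \<notin> maxideal R"
  shows "w * P - u * q' \<notin> I (i + 2)"
proof
  assume "w * P - u * q' \<in> I (i + 2)"
  then have "ideal_prod (I i) (I (i + 2)) = elt_times P (I (i + 2))"
    by (rule ideal_prod_eq_elt_times_of_unit_shift[OF equalityD1[OF prod_eq] q' assms])
  moreover have "q \<in> I i" "v q = v P" using q assms(3) by (simp_all add: Iideal_iff)
  ultimately have "ideal_prod (I i) (I (i + 2)) = elt_times q (I (i + 2))"
    using ideal_prod_Iideal_change_generator[OF _ assms(2) _ q(2)] by blast
  then show False using prod_ne by simp
qed

abbreviation J :: "'k \<Rightarrow> 'k set" where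
  "J \<alpha> \<equiv> plus_principal R (q + \<alpha> * q') (I (i + 2))"

lemma J_generator:
  assumes "\<alpha> \<in> R"
  shows "q + \<alpha> * q' \<in> I i" "q + \<alpha> * q' \<noteq> 0" "v (q + \<alpha> * q') = aseq R v i"
proof -
  have "\<alpha> * q' = 0 \<or> v q < v (\<alpha> * q')"
    using assms q q' val_mult[of \<alpha> q'] val_nonneg[of \<alpha>] aseq_less_iff[of i "i + 1"]
    by (cases "\<alpha> = 0") auto
  then show "q + \<alpha> * q' \<noteq> 0" "v (q + \<alpha> * q') = aseq R v i"
    using val_add_eq_of_less[OF q(2)] q(3) by auto
  then show "q + \<alpha> * q' \<in> I i"
    using assms q q' by (auto simp: Iideal_iff intro: subring_add subring_mult)
qed

lemma is_submodule_J: "is_submodule R (J \<alpha>)"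
  by (rule is_submodule_plus_principal[OF is_submodule_Iideal])

lemma J_subset: "\<alpha> \<in> R \<Longrightarrow> J \<alpha> \<subseteq> R"
  using J_generator(1) Iideal_subset by (intro plus_principal_subset) auto

text \<open>The case \<open>0 < v(w)\<close> of \<open>(R : J\<^sub>\<alpha>) \<subseteq> (J\<^sub>\<alpha> : J\<^sub>\<alpha>)\<close>: write \<open>w p \<equiv> u q' mod I\<^sub>i\<^sub>+\<^sub>2\<close>;
  a unit \<open>u\<close> is excluded by \<open>I\<^sub>i I\<^sub>i\<^sub>+\<^sub>2 \<noteq> q I\<^sub>i\<^sub>+\<^sub>2\<close>.\<close>
lemma mult_J_subset_of_val_pos:
  assumes \<alpha>: "\<alpha> \<in> R" and w: "0 < v w" "elt_times w (J \<alpha>) \<subseteq> R"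
  shows "elt_times w (J \<alpha>) \<subseteq> J \<alpha>"
proof (cases "w = 0")
  case False
  let ?p = "q + \<alpha> * q'"
  have wI: "elt_times w (I (i + 2)) \<subseteq> R"
    using w(2) subset_plus_principal by (auto simp: elt_times_subset_iff)
  have w_Iideal: "w * x \<in> J \<alpha>" if "x \<in> I (i + 2)" for x
  proof -
    have "w * x \<in> I (Suc (i + 2))"
      using mult_Iideal_Suc[OF w(1) wI] that by (simp add: elt_times_subset_iff)
    then show ?thesis
      using Iideal_antimono[of "i + 2" "Suc (i + 2)"] subset_plus_principal by auto
  qed
  have w_generator: "w * ?p \<in> J \<alpha>"
  proof -
    have "w * ?p \<in> R" "w * ?p \<noteq> 0" "aseq R v i < v (w * ?p)"
      using w False J_generator[OF \<alpha>] val_mult[of w ?p]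
        generator_mem_plus_principal[of "I (i + 2)" ?p]
      by (auto simp: elt_times_subset_iff)
    then have "w * ?p \<in> I (Suc i)" by (rule Iideal_SucI)
    then obtain u where u: "u \<in> R" "w * ?p - u * q' \<in> I (i + 2)"
      using Iideal_peel[OF q'] by auto
    then have "u \<in> maxideal R"
      using unit_shift_notin_Iideal[OF J_generator[OF \<alpha>] w(1) wI u(1)] by auto
    then have "u * q' \<in> I (i + 2)"
      using q' val_mult[of u q'] aseq_Suc_le[OF val_mem_valsemi, of "u * q'" "i + 1"] u(1)
      by (cases "u = 0") (auto simp: maxideal_iff Iideal_iff intro: subring_mult)
    then have "w * ?p \<in> I (i + 2)"
      using submodule_add[OF is_submodule_Iideal u(2)] by fastforce
    then show ?thesis using subset_plus_principal by (rule subsetD[rotated])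
  qed
  show ?thesis
    unfolding elt_times_subset_iff
  proof (intro ballI)
    fix x assume "x \<in> J \<alpha>"
    then obtain r y where r: "r \<in> R" and y: "y \<in> I (i + 2)" and x: "x = r * ?p + y"
      unfolding plus_principal_iff by blast
    have "w * x = r * (w * ?p) + w * y" by (simp add: x algebra_simps)
    then show "w * x \<in> J \<alpha>"
      using submodule_add[OF is_submodule_J submodule_smult[OF is_submodule_J r w_generator]]
        w_Iideal[OF y] by simp
  qed
qed (use submodule_zero[OF is_submodule_J] in \<open>simp add: elt_times_subset_iff\<close>)

lemma mult_J_subset:
  assumes \<alpha>: "\<alpha> \<in> R" and n: "i + 2 \<le> cond_index R v" and y: "elt_times y (J \<alpha>) \<subseteq> R"
  shows "elt_times y (J \<alpha>) \<subseteq> J \<alpha>"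
proof (cases "y = 0")
  case False
  have "elt_times y (I (i + 2)) \<subseteq> R"
    using y subset_plus_principal by (auto simp: elt_times_subset_iff)
  then have "0 \<le> v y"
    using val_nonneg_if_mult_Iideal[OF n _ False] n by simp
  then obtain r where r: "r \<in> R" "y = r \<or> 0 < v (y - r)"
    using residue_lift by blast
  have r_stable: "elt_times r (J \<alpha>) \<subseteq> J \<alpha>"
    using submodule_smult[OF is_submodule_J r(1)] by (auto simp: elt_times_subset_iff)
  show ?thesis
  proof (cases "y = r")
    case False
    have "elt_times (y - r) (J \<alpha>) \<subseteq> R"
      using y J_subset[OF \<alpha>] r(1)
      by (auto simp: elt_times_subset_iff left_diff_distrib intro: subring_diff subring_mult)
    then have "elt_times (y - r) (J \<alpha>) \<subseteq> J \<alpha>"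
      using mult_J_subset_of_val_pos[OF \<alpha>] r(2) False by simp
    show ?thesis
      unfolding elt_times_subset_iff
    proof
      fix x assume "x \<in> J \<alpha>"
      then have "(y - r) * x \<in> J \<alpha>" "r * x \<in> J \<alpha>"
        using \<open>elt_times (y - r) (J \<alpha>) \<subseteq> J \<alpha>\<close> r_stable by (auto simp: elt_times_subset_iff)
      then show "y * x \<in> J \<alpha>"
        using submodule_add[OF is_submodule_J] by (fastforce simp: left_diff_distrib)
    qed
  qed (use r_stable in simp)
qed (use submodule_zero[OF is_submodule_J] in \<open>simp add: elt_times_subset_iff\<close>)

lemma J_mem_trace_ideals: "\<alpha> \<in> R \<Longrightarrow> i + 2 \<le> cond_index R v \<Longrightarrow> J \<alpha> \<in> trace_ideals R"
  using J_generator[of \<alpha>] generator_mem_plus_principal[of "I (i + 2)"]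
  by (intro trace_idealsI[OF is_submodule_J J_subset] mult_J_subset) auto

text \<open>Write \<open>q + \<beta> q' = r (q + \<alpha> q') + x\<close> with \<open>x = u q' - s q \<in> I\<^sub>i\<^sub>+\<^sub>2\<close>, \<open>s = r - 1\<close>:
  a unit \<open>s\<close> gives \<open>v(x) = a\<^sub>i\<close>; otherwise \<open>u\<close> is a unit, which \<open>unit_shift_notin_Iideal\<close>
  excludes for \<open>w = s\<close> (or \<open>s = 0\<close> and \<open>v(x) = a\<^sub>i\<^sub>+\<^sub>1\<close>).\<close>
lemma J_not_subset:
  assumes \<alpha>: "\<alpha> \<in> R" and \<beta>: "\<beta> \<in> R" and unit: "\<alpha> - \<beta> \<notin> maxideal R"
  shows "\<not> J \<beta> \<subseteq> J \<alpha>"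
proof
  assume "J \<beta> \<subseteq> J \<alpha>"
  then have "q + \<beta> * q' \<in> J \<alpha>"
    using generator_mem_plus_principal[of "I (i + 2)"] by auto
  then obtain r x where r: "r \<in> R" and x: "x \<in> I (i + 2)" and eq: "q + \<beta> * q' = r * (q + \<alpha> * q') + x"
    unfolding plus_principal_iff by blast
  define s where "s = r - 1"
  define u where "u = \<beta> - \<alpha> - s * \<alpha>"
  have s: "s \<in> R" using r by (simp add: s_def subring_diff)
  have u: "u \<in> R" using s \<alpha> \<beta> by (simp add: u_def subring_diff subring_mult)
  have x_eq: "x = - (s * q) + u * q'"
    using eq by (simp add: s_def u_def algebra_simps)
  have x_val: "aseq R v (i + 2) \<le> v x" if "x \<noteq> 0"
    using x that by (simp add: Iideal_iff)
  show False
  proof (cases "s \<in> maxideal R")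
    case False
    then have sq: "- (s * q) \<noteq> 0" "v (- (s * q)) = aseq R v i"
      using s q val_mult[of s q] not_in_maxideal_iff by auto
    have "u * q' = 0 \<or> v (- (s * q)) < v (u * q')"
      using u q' sq(2) val_mult[of u q'] val_nonneg[of u] aseq_less_iff[of i "i + 1"]
      by (cases "u = 0") auto
    then have "x \<noteq> 0" "v x = aseq R v i"
      using val_add_eq_of_less[OF sq(1)] sq(2) x_eq by auto
    then show False using x_val aseq_le_iff[of "i + 2" i] by simp
  next
    case True
    have "u \<notin> maxideal R"
    proof
      assume "u \<in> maxideal R"
      moreover have "0 - s * \<alpha> \<in> maxideal R"
        using maxideal_diff[OF zero_mem_maxideal maxideal_mult[OF \<alpha> True]] by (simp add: mult.commute)
      ultimately have "(0 - s * \<alpha>) - u \<in> maxideal R" by (rule maxideal_diff[rotated])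
      then show False using unit by (simp add: u_def)
    qed
    then have u_unit: "u \<noteq> 0" "v (u * q') = aseq R v (i + 1)"
      using u q' val_mult[of u q'] not_in_maxideal_iff by auto
    show False
    proof (cases "s = 0")
      case True
      then show False
        using x_eq x_val u_unit q'(2) aseq_le_iff[of "i + 2" "i + 1"] by simp
    next
      case False
      then have "0 < v s" using True by (simp add: maxideal_iff)
      moreover have "elt_times s (I (i + 2)) \<subseteq> R"
        using s Iideal_subset by (auto simp: elt_times_subset_iff intro: subring_mult)
      moreover have "s * q - u * q' \<in> I (i + 2)"
        using submodule_uminus[OF is_submodule_Iideal x] x_eq by simp
      ultimately show False
        using unit_shift_notin_Iideal[OF _ q(2,3)] q u \<open>u \<notin> maxideal R\<close>
        by (auto simp: Iideal_iff)
    qed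
  qed
qed

lemma infinite_trace_ideals:
  assumes n: "i + 2 \<le> cond_index R v" and k: "infinite (residue_field R)"
  shows "infinite (trace_ideals R)"
proof
  assume "finite (trace_ideals R)"
  then have "finite (J ` R)"
    using J_mem_trace_ideals[OF _ n] by (auto intro: finite_subset)
  moreover have "{s \<in> R. \<alpha> - s \<in> maxideal R} = {s \<in> R. \<beta> - s \<in> maxideal R}"
    if "\<alpha> \<in> R" "\<beta> \<in> R" "J \<alpha> = J \<beta>" for \<alpha> \<beta>
  proof -
    have "\<alpha> - \<beta> \<in> maxideal R" "\<beta> - \<alpha> \<in> maxideal R"
      using J_not_subset that by auto
    have "\<alpha> - s \<in> maxideal R \<longleftrightarrow> \<beta> - s \<in> maxideal R" for s
      using maxideal_diff[OF _ \<open>\<alpha> - \<beta> \<in> maxideal R\<close>, of "\<alpha> - s"]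
        maxideal_diff[OF _ \<open>\<beta> - \<alpha> \<in> maxideal R\<close>, of "\<beta> - s"]
      by (auto simp: algebra_simps)
    then show ?thesis by blast
  qed
  ultimately have "finite (residue_field R)"
    unfolding residue_field_def by (rule finite_image_factor)
  then show False using k by simp
qed

end

theorem proposition3p6:
  fixes R :: "'k::field set" and v :: "'k \<Rightarrow> int" and i :: nat and q q' :: 'k
  assumes subring: "is_subring R"
    and fracfield: "is_frac_field_of R"
    and fingen: "fin_gen_over R (int_closure R)"
    and val: "normalized_valuation_of (int_closure R) v"
    and residue: "residue_iso R v"
    and n4: "cond_index R v \<ge> 4"
    and i1: "1 \<le> i" and i2: "i \<le> cond_index R v - 3"
    and qR: "q \<in> R" and q0: "q \<noteq> 0" and vq: "v q = aseq R v i"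
    and q'R: "q' \<in> R" and q'0: "q' \<noteq> 0" and vq': "v q' = aseq R v (i + 1)"
    and hyp1: "ideal_prod (Iideal R v i) (Iideal R v (i + 2)) \<noteq> elt_times q (Iideal R v (i + 2))"
    and hyp2: "ideal_prod (Iideal R v (i + 1)) (Iideal R v (i + 3)) = elt_times q' (Iideal R v (i + 3))"
  shows "(\<forall>\<alpha>\<in>R. plus_principal R (q + \<alpha> * q') (Iideal R v (i + 2)) \<in> trace_ideals R)
       \<and> (\<forall>\<alpha>\<in>R. \<forall>\<beta>\<in>R. \<alpha> - \<beta> \<notin> maxideal R \<longrightarrow>
            \<not> (plus_principal R (q + \<beta> * q') (Iideal R v (i + 2))
                 \<subseteq> plus_principal R (q + \<alpha> * q') (Iideal R v (i + 2))))
       \<and> (infinite (residue_field R) \<longrightarrow> infinite (trace_ideals R))"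
proof -
  interpret trace_ideal_family R v i q q'
    by unfold_locales (use assms in simp_all)
  have n: "i + 2 \<le> cond_index R v" using n4 i2 by simp
  show ?thesis
    using J_mem_trace_ideals[OF _ n] J_not_subset infinite_trace_ideals[OF n] by blast
qed

end
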